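(* For any partition $\lambda$, the function $s_\lambda:\mathbb{N}\to\mathbb{N}$ is a Castelnuovo function of the same weight as $\lambda$. The correspondence $\lambda\mapsto s_\lambda$ is a surjective map from the set of all partitions to the set of all Castelnuovo functions. Furthermore $(b(\lambda),w(\lambda))=(b(s_\lambda),w(s_\lambda))$.
   Context: $\mathbb{N}=\{0,1,2,\dots\}$. A partition is a finite nonincreasing sequence $\lambda=(\lambda_1,\dots,\lambda_r)$ of positive integers (the empty sequence is the partition of $0$); set $\lambda_i=0$ for $i<1$ and $i>r$; its weight is $\sum_i\lambda_i$. Its Ferrers graph has row $i$ (rows indexed from $0$) containing $\lambda_{i+1}$ left-justified unit squares, columns indexed from $0$; the square in row $r$, column $c$ is black if $r+c$ is even and white otherwise; $b(\lambda)$, $w(\lambda)$ are the numbers of black and white squares. Define $s_\lambda(m)$, for $m\in\mathbb{N}$, as the number of squares $(r,c)$ of the Ferrers graph with $r+c=m$, i.e. $s_\lambda(m)=\#\{i\ge 1: i\le m+1,\ \lambda_i\ge m+2-i\}$. A Castelnuovo function is a finitely supported function $s:\mathbb{N}\to\mathbb{N}$ such that for some integer $\sigma\ge 0$, $s(0)=1,s(1)=2,\dots,s(\sigma-1)=\sigma$ and $s(\sigma-1)\ge s(\sigma)\ge s(\sigma+1)\ge\dots\ge 0$ (with the convention $s(-1)=0$ when $\sigma=0$). Its weight is $\sum_n s(n)$, and $b(s)=\sum_i s(2i)$, $w(s)=\sum_i s(2i+1)$. *)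

theory Defs
  imports Main
begin

definition is_partition :: "nat list \<Rightarrow> bool" where
  "is_partition lam \<longleftrightarrow> sorted_wrt (\<ge>) lam \<and> (\<forall>x\<in>set lam. 0 < x)"

text \<open>Part lam i = lambda_i (1-indexed), 0 outside 1..r.\<close>
definition part :: "nat list \<Rightarrow> nat \<Rightarrow> nat" where
  "part lam i = (if 1 \<le> i \<and> i \<le> length lam then lam ! (i - 1) else 0)"

definition pweight :: "nat list \<Rightarrow> nat" where
  "pweight lam = sum_list lam"

text \<open>Squares (r,c) of the Ferrers graph, rows and columns indexed from 0.\<close>
definition ferrers :: "nat list \<Rightarrow> (nat \<times> nat) set" where
  "ferrers lam = {(r, c). r < length lam \<and> c < lam ! r}"

definition black_part :: "nat list \<Rightarrow> nat" where
  "black_part lam = card {(r, c) \<in> ferrers lam. even (r + c)}"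

definition white_part :: "nat list \<Rightarrow> nat" where
  "white_part lam = card {(r, c) \<in> ferrers lam. odd (r + c)}"

definition s_part :: "nat list \<Rightarrow> nat \<Rightarrow> nat" where
  "s_part lam m = card {i. 1 \<le> i \<and> i \<le> m + 1 \<and> part lam i \<ge> m + 2 - i}"

definition castelnuovo :: "(nat \<Rightarrow> nat) \<Rightarrow> bool" where
  "castelnuovo s \<longleftrightarrow> finite {n. s n \<noteq> 0} \<and>
     (\<exists>\<sigma>::nat. (\<forall>n<\<sigma>. s n = n + 1) \<and>
        (if \<sigma> = 0 then s 0 \<le> 0 else s \<sigma> \<le> s (\<sigma> - 1)) \<and>
        (\<forall>n\<ge>\<sigma>. s (Suc n) \<le> s n))"

definition fweight :: "(nat \<Rightarrow> nat) \<Rightarrow> nat" where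
  "fweight s = (\<Sum>n\<in>{n. s n \<noteq> 0}. s n)"

definition black_fun :: "(nat \<Rightarrow> nat) \<Rightarrow> nat" where
  "black_fun s = (\<Sum>i\<in>{i. s (2 * i) \<noteq> 0}. s (2 * i))"

definition white_fun :: "(nat \<Rightarrow> nat) \<Rightarrow> nat" where
  "white_fun s = (\<Sum>i\<in>{i. s (2 * i + 1) \<noteq> 0}. s (2 * i + 1))"

end

(*
  s_lam m counts the cells of the Ferrers diagram of lam on the antidiagonal r + c = m, and
  Ferrers diagrams are exactly the finite down-closed subsets of N x N. In such a set the
  m-th antidiagonal has at most m + 1 cells; the antidiagonals are full up to the first one
  that is not, and once a cell (a, b) is missing, deleting row a maps antidiagonal n + 1
  injectively into antidiagonal n for every n >= a + b, so the counts never increase again.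
  Conversely a Castelnuovo function s is the antidiagonal count of the cells (r, c) with
  r < s (r + c), which is down-closed because s first grows by steps of one and then
  decreases. Weight and colour counts are sums of the antidiagonal counts over all, even
  and odd antidiagonals.
*)

theory Submission
  imports Defs
begin

definition diag_count :: "(nat \<times> nat) set \<Rightarrow> nat \<Rightarrow> nat" where
  "diag_count D m = card {(r, c) \<in> D. r + c = m}"

definition down_closed :: "(nat \<times> nat) set \<Rightarrow> bool" where
  "down_closed D \<longleftrightarrow> (\<forall>r c r' c'. (r, c) \<in> D \<longrightarrow> r' \<le> r \<longrightarrow> c' \<le> c \<longrightarrow> (r', c') \<in> D)"

lemma down_closedD: "down_closed D \<Longrightarrow> (r, c) \<in> D \<Longrightarrow> r' \<le> r \<Longrightarrow> c' \<le> c \<Longrightarrow> (r', c') \<in> D"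
  unfolding down_closed_def by blast

lemma antidiagonal_eq_image:
  fixes D :: "(nat \<times> nat) set"
  shows "{(r, c) \<in> D. r + c = m} = (\<lambda>r. (r, m - r)) ` {r. r \<le> m \<and> (r, m - r) \<in> D}"
  by (auto simp: image_iff)

lemma finite_antidiagonal:
  fixes D :: "(nat \<times> nat) set"
  shows "finite {(r, c) \<in> D. r + c = m}"
  unfolding antidiagonal_eq_image by simp

lemma diag_count_eq_card_rows: "diag_count D m = card {r. r \<le> m \<and> (r, m - r) \<in> D}"
  unfolding diag_count_def antidiagonal_eq_image by (rule card_image) (auto simp: inj_on_def)

lemma diag_count_le: "diag_count D m \<le> m + 1"
proof -
  have "card {r. r \<le> m \<and> (r, m - r) \<in> D} \<le> card {..m}"
    by (rule card_mono) auto
  then show ?thesis by (simp add: diag_count_eq_card_rows)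
qed

lemma diag_count_eq_Suc_iff: "diag_count D m = m + 1 \<longleftrightarrow> (\<forall>r\<le>m. (r, m - r) \<in> D)"
proof
  assume "diag_count D m = m + 1"
  then have "{r. r \<le> m \<and> (r, m - r) \<in> D} = {..m}"
    by (intro card_subset_eq) (auto simp: diag_count_eq_card_rows)
  then show "\<forall>r\<le>m. (r, m - r) \<in> D" by blast
next
  assume "\<forall>r\<le>m. (r, m - r) \<in> D"
  then have "{r. r \<le> m \<and> (r, m - r) \<in> D} = {..m}" by auto
  then show "diag_count D m = m + 1" by (simp add: diag_count_eq_card_rows)
qed

lemma diag_count_eq_0_iff: "diag_count D m = 0 \<longleftrightarrow> (\<forall>(r, c) \<in> D. r + c \<noteq> m)"
  unfolding diag_count_def using finite_antidiagonal[of D m] by auto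

text \<open>Antidiagonal \<open>n + 1\<close> has no cell in row \<open>a\<close>, since that cell would lie to the right
  of the missing \<open>(a, b)\<close>. So closing the gap at row \<open>a\<close> embeds its rows into those of
  antidiagonal \<open>n\<close>: cells above row \<open>a\<close> move left, cells below it move up.\<close>
lemma diag_count_Suc_le:
  assumes D: "down_closed D" and gap: "(a, b) \<notin> D" and n: "a + b \<le> n"
  shows "diag_count D (Suc n) \<le> diag_count D n"
proof -
  let ?R = "\<lambda>m. {r. r \<le> m \<and> (r, m - r) \<in> D}"
  let ?f = "\<lambda>r. if r < a then r else r - 1"
  have inj: "inj_on ?f (- {a})"
    by (auto simp: inj_on_def)
  have "a \<notin> ?R (Suc n)"
    using gap n down_closedD[OF D, of a "Suc n - a" a b] by force
  then have "inj_on ?f (?R (Suc n))"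
    by (intro inj_on_subset[OF inj]) blast
  moreover have "?f ` ?R (Suc n) \<subseteq> ?R n"
  proof (rule image_subsetI)
    fix r assume "r \<in> ?R (Suc n)"
    then have r: "r \<le> Suc n" "(r, Suc n - r) \<in> D" "r \<noteq> a"
      using \<open>a \<notin> ?R (Suc n)\<close> by auto
    show "?f r \<in> ?R n"
    proof (cases "r < a")
      case True
      then show ?thesis using n r down_closedD[OF D r(2), of r "n - r"] by auto
    next
      case False
      then have "Suc n - r < b" using gap down_closedD[OF D r(2), of a b] by fastforce
      then show ?thesis
        using False n r down_closedD[OF D r(2), of "r - 1" "Suc n - r"] by auto
    qed
  qed
  ultimately show ?thesis
    unfolding diag_count_eq_card_rows by (rule card_inj_on_le) simp
qed

lemma finite_diag_count_support:
  assumes "finite D"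
  shows "finite {m. diag_count D m \<noteq> 0}"
proof -
  have "{m. diag_count D m \<noteq> 0} = (\<lambda>(r, c). r + c) ` D"
    by (force simp: diag_count_eq_0_iff)
  then show ?thesis using assms by simp
qed

lemma castelnuovoI:
  assumes "finite {n. s n \<noteq> 0}" and "\<And>n. n < \<sigma> \<Longrightarrow> s n = n + 1"
    and "s \<sigma> \<le> \<sigma>" and "\<And>n. \<sigma> \<le> n \<Longrightarrow> s (Suc n) \<le> s n"
  shows "castelnuovo s"
  unfolding castelnuovo_def
proof (intro conjI exI[of _ \<sigma>])
  show "if \<sigma> = 0 then s 0 \<le> 0 else s \<sigma> \<le> s (\<sigma> - 1)"
    using assms(2)[of "\<sigma> - 1"] assms(3) by auto
qed (use assms in auto)

lemma castelnuovoE: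
  assumes "castelnuovo s"
  obtains \<sigma> where "\<And>n. n < \<sigma> \<Longrightarrow> s n = n + 1" and "\<And>n. s n \<le> n + 1"
    and "\<And>m n. \<sigma> \<le> m \<Longrightarrow> m \<le> n \<Longrightarrow> s n \<le> s m"
proof -
  obtain \<sigma> where up: "\<forall>n<\<sigma>. s n = n + 1"
    and peak: "if \<sigma> = 0 then s 0 \<le> 0 else s \<sigma> \<le> s (\<sigma> - 1)"
    and down: "\<forall>n\<ge>\<sigma>. s (Suc n) \<le> s n"
    using assms unfolding castelnuovo_def by blast
  have antimono: "s n \<le> s m" if "\<sigma> \<le> m" "m \<le> n" for m n
    using that(2)
  proof (induction n rule: dec_induct)
    case (step n)
    then show ?case using down that(1) by (meson le_trans)
  qed simp
  have "s \<sigma> \<le> \<sigma>"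
    using peak up[rule_format, of "\<sigma> - 1"] by (cases "\<sigma> = 0") auto
  then have "s n \<le> n + 1" for n
    using up antimono[of \<sigma> n] by (cases "n < \<sigma>") auto
  with up antimono show ?thesis using that by blast
qed

lemma castelnuovo_diag_count:
  assumes fin: "finite D" and D: "down_closed D"
  shows "castelnuovo (diag_count D)"
proof -
  have "\<exists>m. diag_count D m \<noteq> m + 1"
  proof (rule ccontr)
    assume "\<not> ?thesis"
    then have "{m. diag_count D m \<noteq> 0} = UNIV" by auto
    then show False using finite_diag_count_support[OF fin] by simp
  qed
  define \<sigma> where "\<sigma> = (LEAST m. diag_count D m \<noteq> m + 1)"
  have full: "diag_count D n = n + 1" if "n < \<sigma>" for n
    using not_less_Least[of n "\<lambda>m. diag_count D m \<noteq> m + 1"] that unfolding \<sigma>_def by blast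
  have "diag_count D \<sigma> \<noteq> \<sigma> + 1"
    unfolding \<sigma>_def by (rule LeastI_ex) fact
  moreover from this obtain a where "a \<le> \<sigma>" and gap: "(a, \<sigma> - a) \<notin> D"
    using diag_count_eq_Suc_iff by blast
  ultimately show ?thesis
    using diag_count_le[of D \<sigma>] diag_count_Suc_le[OF D gap]
    by (intro castelnuovoI[OF finite_diag_count_support[OF fin] full]) auto
qed

lemma card_cells_on_antidiagonals:
  fixes D :: "(nat \<times> nat) set"
  assumes "finite D"
  shows "card {(r, c) \<in> D. P (r + c)} = (\<Sum>m | P m \<and> diag_count D m \<noteq> 0. diag_count D m)"
proof -
  let ?C = "{(r, c) \<in> D. P (r + c)}" and ?d = "\<lambda>(r, c). r + c"
  have "finite ?C" using assms by (rule rev_finite_subset) auto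
  then have "card ?C = (\<Sum>m \<in> ?d ` ?C. card {p \<in> ?C. ?d p = m})"
    using sum.image_gen[of ?C "\<lambda>_. 1::nat" ?d] by simp
  also have "?d ` ?C = {m. P m \<and> diag_count D m \<noteq> 0}"
    by (force simp: diag_count_eq_0_iff)
  also have "(\<Sum>m | P m \<and> diag_count D m \<noteq> 0. card {p \<in> ?C. ?d p = m})
      = (\<Sum>m | P m \<and> diag_count D m \<noteq> 0. diag_count D m)"
    unfolding diag_count_def by (intro sum.cong refl arg_cong[where f = card]) auto
  finally show ?thesis .
qed

lemma sum_nonzero_reindex:
  fixes f :: "'a \<Rightarrow> 'b::comm_monoid_add"
  assumes "inj h"
  shows "(\<Sum>i | f (h i) \<noteq> 0. f (h i)) = (\<Sum>m | m \<in> range h \<and> f m \<noteq> 0. f m)"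
proof -
  have "{m. m \<in> range h \<and> f m \<noteq> 0} = h ` {i. f (h i) \<noteq> 0}" by auto
  then show ?thesis using assms by (simp add: sum.reindex inj_on_def)
qed

lemma fweight_diag_count: "finite D \<Longrightarrow> fweight (diag_count D) = card D"
  using card_cells_on_antidiagonals[of D "\<lambda>_. True"] by (simp add: fweight_def)

lemma black_fun_diag_count:
  assumes "finite D"
  shows "black_fun (diag_count D) = card {(r, c) \<in> D. even (r + c)}"
proof -
  have "range (\<lambda>i::nat. 2 * i) = {m. even m}" by (auto elim: evenE)
  then show ?thesis
    using sum_nonzero_reindex[of "\<lambda>i::nat. 2 * i" "diag_count D"]
      card_cells_on_antidiagonals[OF assms, of even]
    by (simp add: black_fun_def inj_on_def)
qed

lemma white_fun_diag_count:
  assumes "finite D"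
  shows "white_fun (diag_count D) = card {(r, c) \<in> D. odd (r + c)}"
proof -
  have "range (\<lambda>i::nat. 2 * i + 1) = {m. odd m}" by (auto elim: oddE)
  then show ?thesis
    using sum_nonzero_reindex[of "\<lambda>i::nat. 2 * i + 1" "diag_count D"]
      card_cells_on_antidiagonals[OF assms, of odd]
    by (simp add: white_fun_def inj_on_def)
qed

lemma s_part_eq_diag_count: "s_part lam = diag_count (ferrers lam)"
proof
  fix m
  have "{i. 1 \<le> i \<and> i \<le> m + 1 \<and> part lam i \<ge> m + 2 - i}
      = Suc ` {r. r \<le> m \<and> (r, m - r) \<in> ferrers lam}"
    (is "?I = Suc ` ?R")
  proof (intro set_eqI iffI)
    fix i assume "i \<in> ?I"
    then obtain r where "i = Suc r" by (cases i) auto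
    with \<open>i \<in> ?I\<close> show "i \<in> Suc ` ?R"
      by (auto simp: part_def ferrers_def split: if_splits)
  qed (auto simp: part_def ferrers_def)
  then show "s_part lam m = diag_count (ferrers lam) m"
    unfolding s_part_def diag_count_eq_card_rows by (simp add: card_image)
qed

lemma ferrers_eq_Sigma: "ferrers lam = (SIGMA r:{..<length lam}. {..<lam ! r})"
  by (auto simp: ferrers_def)

lemma finite_ferrers: "finite (ferrers lam)"
  by (simp add: ferrers_eq_Sigma)

lemma card_ferrers: "card (ferrers lam) = sum_list lam"
  by (simp add: ferrers_eq_Sigma sum_list_sum_nth atLeast0LessThan)

lemma down_closed_ferrers:
  assumes "is_partition lam"
  shows "down_closed (ferrers lam)"
  unfolding down_closed_def
proof (intro allI impI)
  fix r c r' c'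
  assume "(r, c) \<in> ferrers lam" and le: "r' \<le> r" "c' \<le> c"
  then have r: "r < length lam" "c < lam ! r" by (auto simp: ferrers_def)
  moreover have "lam ! r \<le> lam ! r'"
    using assms r le by (metis is_partition_def le_eq_less_or_eq sorted_wrt_iff_nth_less)
  ultimately show "(r', c') \<in> ferrers lam" using le by (auto simp: ferrers_def)
qed

lemma finite_down_closed_eq_lessThan:
  fixes A :: "nat set"
  assumes "finite A" and "\<And>m n. n \<in> A \<Longrightarrow> m \<le> n \<Longrightarrow> m \<in> A"
  shows "A = {..<card A}"
proof (cases "A = {}")
  case False
  then have "A = {..Max A}"
    using assms Max_ge Max_in by blast
  then show ?thesis by (metis card_atMost lessThan_Suc_atMost)
qed simp

lemma ex_partition_ferrers_eq:
  assumes fin: "finite D" and D: "down_closed D"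
  shows "\<exists>lam. is_partition lam \<and> ferrers lam = D"
proof -
  define row where "row r = {c. (r, c) \<in> D}" for r
  define len where "len r = card (row r)" for r
  define height where "height = card {r. (r, 0) \<in> D}"
  define lam where "lam = map len [0..<height]"
  have "finite {r. (r, 0) \<in> D}"
    using finite_imageI[OF fin, of fst] by (rule rev_finite_subset) force
  then have rows: "{r. (r, 0) \<in> D} = {..<height}"
    unfolding height_def using down_closedD[OF D]
    by (intro finite_down_closed_eq_lessThan) auto
  have "finite (row r)" for r
    using finite_imageI[OF fin, of snd] unfolding row_def by (rule rev_finite_subset) force
  then have cols: "row r = {..<len r}" for r
    unfolding len_def row_def using down_closedD[OF D]
    by (intro finite_down_closed_eq_lessThan) auto
  have D_eq: "(r, c) \<in> D \<longleftrightarrow> r < height \<and> c < len r" for r c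
    using rows cols[of r] down_closedD[OF D, of r c r 0] unfolding row_def by blast
  have "len r' \<le> len r" if "r \<le> r'" for r r'
    using cols[of r] cols[of r'] down_closedD[OF D _ that] unfolding row_def
    by (metis lessThan_subset_iff mem_Collect_eq order.refl subsetI)
  then have "sorted_wrt (\<ge>) lam"
    unfolding lam_def sorted_wrt_iff_nth_less by simp
  moreover have "\<forall>x\<in>set lam. 0 < x"
    using D_eq rows unfolding lam_def by auto
  moreover have "ferrers lam = D"
    using D_eq unfolding ferrers_def lam_def by auto
  ultimately show ?thesis unfolding is_partition_def by blast
qed

lemma ex_partition_s_part_eq:
  assumes "castelnuovo s"
  shows "\<exists>lam. is_partition lam \<and> s_part lam = s"
proof -
  obtain \<sigma> where up: "\<And>n. n < \<sigma> \<Longrightarrow> s n = n + 1" and bound: "\<And>n. s n \<le> n + 1"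
    and antimono: "\<And>m n. \<sigma> \<le> m \<Longrightarrow> m \<le> n \<Longrightarrow> s n \<le> s m"
    using castelnuovoE[OF assms] by blast
  define D where "D = {(r, c). r < s (r + c)}"
  obtain N where N: "\<And>n. s n \<noteq> 0 \<Longrightarrow> n \<le> N"
    using assms finite_nat_set_iff_bounded_le unfolding castelnuovo_def by auto
  have "r + c \<le> N" if "(r, c) \<in> D" for r c
    using N[of "r + c"] that unfolding D_def by auto
  then have "D \<subseteq> {..N} \<times> {..N}" by fastforce
  then have "finite D" by (rule finite_subset) simp
  have "(r', c') \<in> D" if "(r, c) \<in> D" "r' \<le> r" "c' \<le> c" for r c r' c'
  proof (cases "r' + c' < \<sigma>")
    case True
    then show ?thesis using up unfolding D_def by simp
  next
    case False
    then have "s (r + c) \<le> s (r' + c')" using antimono that(2,3) by simp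
    then show ?thesis using that unfolding D_def by simp
  qed
  then have "down_closed D" unfolding down_closed_def by blast
  with \<open>finite D\<close> obtain lam where lam: "is_partition lam" "ferrers lam = D"
    using ex_partition_ferrers_eq by blast
  have "{r. r \<le> m \<and> (r, m - r) \<in> D} = {..<s m}" for m
    using bound[of m] unfolding D_def by auto
  then have "diag_count D = s"
    by (simp add: fun_eq_iff diag_count_eq_card_rows)
  with lam show ?thesis by (auto simp: s_part_eq_diag_count)
qed

theorem proposition2:
  shows "(\<forall>lam. is_partition lam \<longrightarrow>
            castelnuovo (s_part lam) \<and> fweight (s_part lam) = pweight lam \<and>
            black_part lam = black_fun (s_part lam) \<and>
            white_part lam = white_fun (s_part lam))
       \<and> (\<forall>s. castelnuovo s \<longrightarrow> (\<exists>lam. is_partition lam \<and> s_part lam = s))"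
proof (intro conjI allI impI)
  fix lam assume "is_partition lam"
  then show "castelnuovo (s_part lam)"
    by (simp add: s_part_eq_diag_count castelnuovo_diag_count finite_ferrers down_closed_ferrers)
  show "fweight (s_part lam) = pweight lam"
    by (simp add: s_part_eq_diag_count fweight_diag_count finite_ferrers card_ferrers pweight_def)
  show "black_part lam = black_fun (s_part lam)"
    by (simp add: s_part_eq_diag_count black_fun_diag_count finite_ferrers black_part_def)
  show "white_part lam = white_fun (s_part lam)"
    by (simp add: s_part_eq_diag_count white_fun_diag_count finite_ferrers white_part_def)
qed (rule ex_partition_s_part_eq)

end
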